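(* Let $p_1\equiv p_2\equiv1\pmod4$ be primes and let $\varepsilon_{p_1p_2}=a+b\sqrt{p_1p_2}$ be the fundamental unit of $\mathbb{Q}(\sqrt{p_1p_2})$. If $N(\varepsilon_{p_1p_2})=1$, then neither $a+1$ nor $a-1$ is a perfect square in $\mathbb{N}$.
   Context: $a,b$ are integers or half-integers; $N$ denotes the norm from $\mathbb{Q}(\sqrt{p_1p_2})$ to $\mathbb{Q}$. *)

theory Defs
  imports Complex_Main "HOL-Computational_Algebra.Primes"
begin

text \<open>Elements of the real quadratic field Q(sqrt d) are written a + b sqrt d with
  a, b rational.  Norm N(a + b sqrt d) = a^2 - d b^2.\<close>

definition qnorm :: "int \<Rightarrow> rat \<Rightarrow> rat \<Rightarrow> rat" where
  "qnorm d a b = a^2 - of_int d * b^2"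

text \<open>a + b sqrt d is an algebraic integer iff its trace 2a and norm are integers.\<close>
definition qint :: "int \<Rightarrow> rat \<Rightarrow> rat \<Rightarrow> bool" where
  "qint d a b \<longleftrightarrow> 2 * a \<in> \<int> \<and> qnorm d a b \<in> \<int>"

definition qunit :: "int \<Rightarrow> rat \<Rightarrow> rat \<Rightarrow> bool" where
  "qunit d a b \<longleftrightarrow> qint d a b \<and> (qnorm d a b = 1 \<or> qnorm d a b = -1)"

definition qval :: "int \<Rightarrow> rat \<Rightarrow> rat \<Rightarrow> real" where
  "qval d a b = of_rat a + of_rat b * sqrt (of_int d)"

definition fundamental_unit :: "int \<Rightarrow> rat \<Rightarrow> rat \<Rightarrow> bool" where
  "fundamental_unit d a b \<longleftrightarrow> qunit d a b \<and> qval d a b > 1 \<and>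
     (\<forall>u v. qunit d u v \<and> qval d u v > 1 \<longrightarrow> qval d a b \<le> qval d u v)"

end

theory Submission
  imports Defs
begin

text \<open>
  With \<open>a = n\<^sup>2 \<plusminus> 1\<close> the norm equation \<open>a\<^sup>2 - d b\<^sup>2 = 1\<close> becomes
  \<open>d b\<^sup>2 = n\<^sup>2 (n\<^sup>2 \<plusminus> 2)\<close>; writing \<open>b = r/s\<close> in lowest terms gives
  \<open>d r\<^sup>2 = n\<^sup>2 (n\<^sup>2 \<plusminus> 2) s\<^sup>2\<close> with \<open>d \<equiv> 1 (mod 4)\<close>.  For odd \<open>n\<close> the right-hand
  side is \<open>3\<close> modulo \<open>4\<close>, which no \<open>d r\<^sup>2\<close> is; for even \<open>n \<noteq> 0\<close> it has odd
  \<open>2\<close>-adic valuation while \<open>d r\<^sup>2\<close> has even valuation.  Hence \<open>n = 0\<close> and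
  \<open>b = 0\<close>, so \<open>a + b \<surd>d = \<plusminus>1\<close> is not a unit greater than \<open>1\<close>.
\<close>

lemma odd_square_mod_4_int:
  fixes z :: int
  assumes "odd z"
  shows "z\<^sup>2 mod 4 = 1"
proof -
  obtain u where "z = 2 * u + 1" using assms oddE by blast
  then have "z\<^sup>2 = 4 * (u\<^sup>2 + u) + 1" by (simp add: power2_eq_square algebra_simps)
  then show ?thesis by presburger
qed

lemma square_mod_4_int:
  fixes z :: int
  shows "z\<^sup>2 mod 4 \<in> {0, 1}"
  using odd_square_mod_4_int[of z] by (cases "even z") (auto simp: power2_eq_square)

lemma twice_odd_times_square_neq_odd_times_square:
  fixes A B x y :: int
  assumes "odd A" "odd B" "x \<noteq> 0"
  shows "2 * A * y\<^sup>2 \<noteq> B * x\<^sup>2"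
  using assms
proof (induction "nat \<bar>x\<bar>" arbitrary: x y rule: less_induct)
  case less
  show ?case
  proof
    assume eq: "2 * A * y\<^sup>2 = B * x\<^sup>2"
    then have "even (B * x\<^sup>2)" by (metis dvd_triv_left mult.assoc)
    then obtain x' where x: "x = 2 * x'" using \<open>odd B\<close> by auto
    from eq have "A * y\<^sup>2 = 2 * (B * x'\<^sup>2)" by (simp add: x power_mult_distrib)
    then have "even (A * y\<^sup>2)" by simp
    then obtain y' where y: "y = 2 * y'" using \<open>odd A\<close> by auto
    from eq have "2 * A * y'\<^sup>2 = B * x'\<^sup>2" by (simp add: x y power_mult_distrib)
    moreover have "x' \<noteq> 0" "nat \<bar>x'\<bar> < nat \<bar>x\<bar>" using x \<open>x \<noteq> 0\<close> by auto
    ultimately show False using less by blast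
  qed
qed

lemma int_times_square_neq_3_mod_4_times_square:
  fixes d m r s :: int
  assumes "d mod 4 = 1" "m mod 4 = 3" "coprime r s"
  shows "d * r\<^sup>2 \<noteq> m * s\<^sup>2"
proof
  assume eq: "d * r\<^sup>2 = m * s\<^sup>2"
  have "odd d" using \<open>d mod 4 = 1\<close> by presburger
  have "odd s"
  proof
    assume "even s"
    then have "even (d * r\<^sup>2)" using eq by simp
    then have "even r" using \<open>odd d\<close> by auto
    with \<open>even s\<close> \<open>coprime r s\<close> show False by fastforce
  qed
  have "(m * s\<^sup>2) mod 4 = 3"
    using \<open>m mod 4 = 3\<close> odd_square_mod_4_int[OF \<open>odd s\<close>] mod_mult_eq[of m 4 "s\<^sup>2"] by simp
  moreover have "(d * r\<^sup>2) mod 4 = r\<^sup>2 mod 4"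
    using \<open>d mod 4 = 1\<close> mod_mult_eq[of d 4 "r\<^sup>2"] by simp
  ultimately show False using eq square_mod_4_int[of r] by simp
qed

lemma rat_int_times_square_eq_int:
  fixes d m :: int and b :: rat
  assumes "of_int d * b\<^sup>2 = of_int m"
  obtains r s :: int where "coprime r s" "s > 0" "d * r\<^sup>2 = m * s\<^sup>2"
proof -
  obtain r s where rs: "quotient_of b = (r, s)" by (cases "quotient_of b")
  have "s > 0" using quotient_of_denom_pos[OF rs] .
  have "of_int d * (of_int r / of_int s)\<^sup>2 = (of_int m :: rat)"
    using assms quotient_of_div[OF rs] by simp
  then have "of_int (d * r\<^sup>2) = (of_int (m * s\<^sup>2) :: rat)"
    using \<open>s > 0\<close> by (simp add: field_simps power_divide)
  then have "d * r\<^sup>2 = m * s\<^sup>2" by (rule of_int_eq_iff[THEN iffD1])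
  with quotient_of_coprime[OF rs] \<open>s > 0\<close> show ?thesis by (rule that)
qed

lemma int_times_rat_square_neq_square_times_square_add_two:
  fixes d n c :: int and b :: rat
  assumes "d mod 4 = 1" "c \<in> {2, -2}" "n \<noteq> 0"
  shows "of_int d * b\<^sup>2 \<noteq> of_int (n\<^sup>2 * (n\<^sup>2 + c))"
proof
  assume "of_int d * b\<^sup>2 = of_int (n\<^sup>2 * (n\<^sup>2 + c))"
  then obtain r s where "coprime r s" "s > 0" and eq: "d * r\<^sup>2 = n\<^sup>2 * (n\<^sup>2 + c) * s\<^sup>2"
    by (rule rat_int_times_square_eq_int)
  show False
  proof (cases "even n")
    case True
    then obtain t where n: "n = 2 * t" by blast
    define k where "k = 2 * t\<^sup>2 + c div 2"
    have k: "n\<^sup>2 + c = 2 * k" and "odd k"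
      using \<open>c \<in> {2, -2}\<close> by (auto simp: k_def n power_mult_distrib)
    have "odd d" using \<open>d mod 4 = 1\<close> by presburger
    have "r \<noteq> 0" using eq k \<open>odd k\<close> \<open>n \<noteq> 0\<close> \<open>s > 0\<close> by auto
    have "2 * k * (n * s)\<^sup>2 = d * r\<^sup>2"
      unfolding eq k by (simp add: power_mult_distrib algebra_simps)
    then show False
      using twice_odd_times_square_neq_odd_times_square[OF \<open>odd k\<close> \<open>odd d\<close> \<open>r \<noteq> 0\<close>] by blast
  next
    case False
    have "(n\<^sup>2 + c) mod 4 = 3"
      using \<open>c \<in> {2, -2}\<close> odd_square_mod_4_int[OF False] by auto presburger+
    then have "(n\<^sup>2 * (n\<^sup>2 + c)) mod 4 = 3"
      using odd_square_mod_4_int[OF False] mod_mult_eq[of "n\<^sup>2" 4 "n\<^sup>2 + c"] by simp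
    then show False
      using int_times_square_neq_3_mod_4_times_square[OF \<open>d mod 4 = 1\<close> _ \<open>coprime r s\<close>] eq
      by blast
  qed
qed

lemma qnorm_eq_1_square_add_pm_1_imp_trivial:
  fixes d n :: int and a b e :: rat
  assumes "d mod 4 = 1" "qnorm d a b = 1" "a = of_int n ^ 2 + e" "e \<in> {1, -1}"
  shows "b = 0"
proof (rule ccontr)
  assume "b \<noteq> 0"
  define c :: int where "c = (if e = 1 then 2 else -2)"
  have "c \<in> {2, -2}" by (simp add: c_def)
  have "d \<noteq> 0" using \<open>d mod 4 = 1\<close> by auto
  have "of_int d * b\<^sup>2 = a\<^sup>2 - 1" using \<open>qnorm d a b = 1\<close> by (simp add: qnorm_def)
  also have "\<dots> = of_int (n\<^sup>2 * (n\<^sup>2 + c))"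
    using \<open>a = of_int n ^ 2 + e\<close> \<open>e \<in> {1, -1}\<close> by (auto simp: c_def power2_eq_square algebra_simps)
  finally have eq: "of_int d * b\<^sup>2 = of_int (n\<^sup>2 * (n\<^sup>2 + c))" .
  moreover have "n \<noteq> 0" using eq \<open>b \<noteq> 0\<close> \<open>d \<noteq> 0\<close> by auto
  ultimately show False
    using int_times_rat_square_neq_square_times_square_add_two[OF \<open>d mod 4 = 1\<close> \<open>c \<in> {2, -2}\<close>] by blast
qed

theorem lemma14:
  fixes p1 p2 :: nat and a b :: rat
  assumes "prime p1" "prime p2" "p1 mod 4 = 1" "p2 mod 4 = 1"
    and "fundamental_unit (int (p1 * p2)) a b"
    and "qnorm (int (p1 * p2)) a b = 1"
  shows "\<not> (\<exists>n::nat. a + 1 = of_nat (n^2)) \<and> \<not> (\<exists>n::nat. a - 1 = of_nat (n^2))"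
proof -
  let ?d = "int (p1 * p2)"
  have "(p1 * p2) mod 4 = 1"
    using assms(3,4) mod_mult_eq[of p1 4 p2] by simp
  then have "?d mod 4 = 1" by (metis of_nat_1 of_nat_numeral zmod_int)
  have "qval ?d a b > 1" using assms(5) by (simp add: fundamental_unit_def)
  have not_square_add: False if "a = of_int n ^ 2 + e" "e \<in> {1, -1}" for n e
  proof -
    have "b = 0"
      using qnorm_eq_1_square_add_pm_1_imp_trivial[OF \<open>?d mod 4 = 1\<close> assms(6) that] .
    then have "a \<le> 1" using assms(6) by (auto simp: qnorm_def power2_eq_1_iff)
    with \<open>b = 0\<close> \<open>qval ?d a b > 1\<close> show False by (simp add: qval_def)
  qed
  show ?thesis
  proof safe
    fix n :: nat assume "a + 1 = of_nat (n^2)"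
    then show False by (intro not_square_add[of "int n" "-1"]) (simp_all add: algebra_simps)
  next
    fix n :: nat assume "a - 1 = of_nat (n^2)"
    then show False by (intro not_square_add[of "int n" 1]) (simp_all add: algebra_simps)
  qed
qed

end
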